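(* Fix $n\ge3$ and $M>0$ satisfying (A) and (B). There exists $\bar\epsilon>0$ such that: if $f:V^n\to[0,1]$ is anonymous and BIC in $\Gamma^0$, then there is a family $\{f_\epsilon\}_{\epsilon\in(0,\bar\epsilon]}$ of anonymous SCFs $f_\epsilon:V^n\to[0,1]$ such that (i) each $f_\epsilon$ is BIC in $\Gamma^\epsilon$, and (ii) $f_\epsilon(v)\to f(v)$ as $\epsilon\to0$ for every $v\in V^n$.
   Context: Fix $n\ge 3$ agents $N=\{1,\dots,n\}$, choosing between Reform $R$ (agent $i$'s utility $v_i$) and Status quo $S$ (utility $0$). Let $M>0$ satisfy (A): $\frac{2}{n}\left[-M^2+M+n-2\right]+\frac{n-2}{n}\left[2M+n-4\right]<0$, and (B): $2M-(n-2)>0$. Let $V=\{-M^2,-1,1,M\}$. For $\epsilon\in[0,1/4]$, the environment $\Gamma^\epsilon$ has independent values $\tilde v_1,\dots,\tilde v_n$ with distributions: for agents $1,2$: $\Pr(-M^2)=0.5-\epsilon$, $\Pr(-1)=\epsilon$, $\Pr(1)=\epsilon$, $\Pr(M)=0.5-\epsilon$; for agents $3,\dots,n$: $\Pr(-M^2)=\epsilon$, $\Pr(-1)=0.5-\epsilon$, $\Pr(1)=0.5-\epsilon$, $\Pr(M)=\epsilon$. An SCF is any $f:V^n\to[0,1]$, defined on all of $V^n$ (including zero-probability profiles). $f$ is anonymous if $f(v)=f(\pi v)$ for all $v\in V^n$ and permutations $\pi$ of $N$, where $\pi v=(v_{\pi(1)},\dots,v_{\pi(n)})$. $f$ is BIC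 in $\Gamma^\epsilon$ if for every agent $i$ and all reports $v_i,v_i'\in V$: $v_i\,\mathbb{E}^\epsilon(f(v_i,\tilde v_{-i}))\ge v_i\,\mathbb{E}^\epsilon(f(v_i',\tilde v_{-i}))$, expectation over $\tilde v_{-i}$ under $\Gamma^\epsilon$. *)

theory Defs
  imports "HOL-Analysis.Analysis" "HOL-Combinatorics.Permutations"
begin

definition Vals :: "real \<Rightarrow> real set" where
  "Vals M = {-(M^2), -1, 1, M}"

definition profiles :: "nat \<Rightarrow> real \<Rightarrow> (nat \<Rightarrow> real) set" where
  "profiles n M = PiE {1..n} (\<lambda>_. Vals M)"

definition pr :: "real \<Rightarrow> real \<Rightarrow> nat \<Rightarrow> real \<Rightarrow> real" where
  "pr M eps i x =
     (if i \<in> {1,2} then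
        (if x = -(M^2) then 1/2 - eps else if x = -1 then eps
         else if x = 1 then eps else if x = M then 1/2 - eps else 0)
      else
        (if x = -(M^2) then eps else if x = -1 then 1/2 - eps
         else if x = 1 then 1/2 - eps else if x = M then eps else 0))"

definition interim :: "nat \<Rightarrow> real \<Rightarrow> real \<Rightarrow> ((nat \<Rightarrow> real) \<Rightarrow> real) \<Rightarrow> nat \<Rightarrow> real \<Rightarrow> real" where
  "interim n M eps f i a =
     (\<Sum>w\<in>PiE ({1..n} - {i}) (\<lambda>_. Vals M).
        (\<Prod>j\<in>{1..n} - {i}. pr M eps j (w j)) * f (w(i := a)))"

definition is_SCF :: "nat \<Rightarrow> real \<Rightarrow> ((nat \<Rightarrow> real) \<Rightarrow> real) \<Rightarrow> bool" where
  "is_SCF n M f \<longleftrightarrow> (\<forall>v\<in>profiles n M. 0 \<le> f v \<and> f v \<le> 1)"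

definition anonymous :: "nat \<Rightarrow> real \<Rightarrow> ((nat \<Rightarrow> real) \<Rightarrow> real) \<Rightarrow> bool" where
  "anonymous n M f \<longleftrightarrow>
     (\<forall>v\<in>profiles n M. \<forall>\<pi>. \<pi> permutes {1..n} \<longrightarrow> f (v \<circ> \<pi>) = f v)"

definition BIC :: "nat \<Rightarrow> real \<Rightarrow> real \<Rightarrow> ((nat \<Rightarrow> real) \<Rightarrow> real) \<Rightarrow> bool" where
  "BIC n M eps f \<longleftrightarrow>
     (\<forall>i\<in>{1..n}. \<forall>a\<in>Vals M. \<forall>b\<in>Vals M.
        a * interim n M eps f i a \<ge> a * interim n M eps f i b)"

end

theory Submission
  imports Defs
begin

(*
  By anonymity, and since agents in the same class {1,2} or {3..n} have the same
  type distribution, BIC in Gamma^eps reduces to three conditions on the interim values Q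
  of agent 1 and of agent 3: Q(M) = Q(1), Q(-1) = Q(-M^2) and Q(1) >= Q(-1).

  Write #a for the number of agents reporting a. Adding x #a + y #a #b to f, for a pooled
  pair (a,b) = (M,1) or (-1,-M^2), changes the interim gap Q(a) - Q(b) of agent k by
  x + y (expected number of other agents reporting b minus those reporting a), and leaves
  the gap of the other pooled pair untouched. The two classes differ in this expectation by
  1 - 4 eps, so x and y can be chosen to close the gap for both classes; since f is BIC in
  Gamma^0 and interim values are polynomial in eps, x and y tend to 0 with eps.

  Finally we mix in, with weight t(eps) -> 0, the SCF (1 + #positive reports)/(n+2). It
  strictly rewards positive reports, does not distinguish M from 1 or -1 from -M^2, and takes
  values in [1/(n+2), 1 - 1/(n+2)], so a weight of order of the corrections restores both
  Q(1) >= Q(-1) and the range [0,1].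
*)

lemma Vals_distinct:
  fixes M :: real
  assumes "0 < M" "M \<noteq> 1"
  shows "distinct [-(M^2), -1, 1, M]"
proof -
  have "M^2 \<noteq> 1" using assms by (simp add: power2_eq_1_iff)
  moreover have "0 < M^2" using assms by simp
  ultimately show ?thesis using assms by (simp; smt (verit))
qed

lemma finite_Vals [simp]: "finite (Vals M)"
  by (simp add: Vals_def)

lemma sum_pr_Vals:
  fixes M :: real
  assumes "0 < M" "M \<noteq> 1"
  shows "(\<Sum>x\<in>Vals M. pr M e k x) = 1"
  using Vals_distinct[OF assms] by (simp add: Vals_def pr_def)

lemma sum_PiE_prod_eq_1:
  fixes p :: "'a \<Rightarrow> 'b \<Rightarrow> real"
  assumes "finite S" "finite V" "\<And>k. k \<in> S \<Longrightarrow> (\<Sum>x\<in>V. p k x) = 1"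
  shows "(\<Sum>w\<in>PiE S (\<lambda>_. V). \<Prod>k\<in>S. p k (w k)) = 1"
  using prod_sum_PiE[of S "\<lambda>_. V" p] assms by simp

lemma sum_PiE_prod_mult_coord:
  fixes p :: "'a \<Rightarrow> 'b \<Rightarrow> real"
  assumes S: "finite S" and V: "finite V" and j: "j \<in> S"
    and one: "\<And>k. k \<in> S \<Longrightarrow> (\<Sum>x\<in>V. p k x) = 1"
  shows "(\<Sum>w\<in>PiE S (\<lambda>_. V). (\<Prod>k\<in>S. p k (w k)) * g (w j)) = (\<Sum>x\<in>V. p j x * g x)"
proof -
  define q where "q k x = p k x * (if k = j then g x else 1)" for k x
  have "(\<Sum>w\<in>PiE S (\<lambda>_. V). (\<Prod>k\<in>S. p k (w k)) * g (w j))
      = (\<Sum>w\<in>PiE S (\<lambda>_. V). \<Prod>k\<in>S. q k (w k))"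
    using S j by (simp add: q_def prod.distrib prod.delta)
  also have "\<dots> = (\<Prod>k\<in>S. \<Sum>x\<in>V. q k x)"
    using S V by (simp add: prod_sum_PiE)
  also have "\<dots> = (\<Sum>x\<in>V. q j x) * (\<Prod>k\<in>S - {j}. \<Sum>x\<in>V. q k x)"
    using S j by (rule prod.remove)
  also have "(\<Prod>k\<in>S - {j}. \<Sum>x\<in>V. q k x) = 1"
    using one by (simp add: q_def)
  finally show ?thesis by (simp add: q_def)
qed

lemma sum_PiE_prod_mult_sum:
  fixes p :: "'a \<Rightarrow> 'b \<Rightarrow> real"
  assumes "finite S" "finite V" "\<And>k. k \<in> S \<Longrightarrow> (\<Sum>x\<in>V. p k x) = 1"
  shows "(\<Sum>w\<in>PiE S (\<lambda>_. V). (\<Prod>k\<in>S. p k (w k)) * (\<Sum>j\<in>S. g j (w j)))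
       = (\<Sum>j\<in>S. \<Sum>x\<in>V. p j x * g j x)"
proof -
  have "(\<Sum>w\<in>PiE S (\<lambda>_. V). (\<Prod>k\<in>S. p k (w k)) * (\<Sum>j\<in>S. g j (w j)))
      = (\<Sum>j\<in>S. \<Sum>w\<in>PiE S (\<lambda>_. V). (\<Prod>k\<in>S. p k (w k)) * g j (w j))"
    by (simp add: sum_distrib_left sum.swap[of _ "PiE S (\<lambda>_. V)"])
  also have "\<dots> = (\<Sum>j\<in>S. \<Sum>x\<in>V. p j x * g j x)"
    using assms by (intro sum.cong refl sum_PiE_prod_mult_coord)
  finally show ?thesis .
qed

definition interim_gap ::
    "nat \<Rightarrow> real \<Rightarrow> real \<Rightarrow> ((nat \<Rightarrow> real) \<Rightarrow> real) \<Rightarrow> nat \<Rightarrow> real \<Rightarrow> real \<Rightarrow> real" where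
  "interim_gap n M e g i a b = interim n M e g i a - interim n M e g i b"

lemma interim_gap_eq_sum:
  "interim_gap n M e g i a b =
     (\<Sum>w\<in>PiE ({1..n} - {i}) (\<lambda>_. Vals M).
        (\<Prod>k\<in>{1..n} - {i}. pr M e k (w k)) * (g (w(i := a)) - g (w(i := b))))"
  by (simp add: interim_gap_def interim_def sum_subtractf right_diff_distrib)

lemma interim_gap_add:
  "interim_gap n M e (\<lambda>v. g v + h v) i a b = interim_gap n M e g i a b + interim_gap n M e h i a b"
  by (simp add: interim_gap_def interim_def distrib_left sum.distrib)

lemma interim_gap_cmult:
  "interim_gap n M e (\<lambda>v. c * g v) i a b = c * interim_gap n M e g i a b"
  by (simp add: interim_gap_eq_sum algebra_simps sum_distrib_left)

lemma interim_gap_const: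
  fixes M :: real
  assumes "0 < M" "M \<noteq> 1"
    and "\<And>w. w \<in> PiE ({1..n} - {i}) (\<lambda>_. Vals M) \<Longrightarrow> g (w(i := a)) - g (w(i := b)) = c"
  shows "interim_gap n M e g i a b = c"
proof -
  have "interim_gap n M e g i a b =
      (\<Sum>w\<in>PiE ({1..n} - {i}) (\<lambda>_. Vals M). \<Prod>k\<in>{1..n} - {i}. pr M e k (w k)) * c"
    by (simp add: interim_gap_eq_sum assms(3) sum_distrib_right)
  also have "\<dots> = c"
    by (subst sum_PiE_prod_eq_1) (simp_all add: sum_pr_Vals[OF assms(1,2)])
  finally show ?thesis .
qed

lemma pr_tendsto:
  "((\<lambda>e. pr M e k x) \<longlongrightarrow> pr M e0 k x) (at e0 within S)"
proof -
  have affine: "pr M 0 k x + e * (pr M 1 k x - pr M 0 k x) = pr M e k x" for e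
    by (simp add: pr_def)
  have "((\<lambda>e. pr M 0 k x + e * (pr M 1 k x - pr M 0 k x))
      \<longlongrightarrow> pr M 0 k x + e0 * (pr M 1 k x - pr M 0 k x)) (at e0 within S)"
    by (intro tendsto_intros)
  then show ?thesis
    by (simp only: affine)
qed

lemma interim_tendsto:
  "((\<lambda>e. interim n M e g i a) \<longlongrightarrow> interim n M e0 g i a) (at e0 within S)"
  unfolding interim_def by (intro tendsto_intros pr_tendsto)

lemma interim_gap_tendsto:
  "((\<lambda>e. interim_gap n M e g i a b) \<longlongrightarrow> interim_gap n M e0 g i a b) (at e0 within S)"
  unfolding interim_gap_def by (intro tendsto_diff interim_tendsto)

definition tally :: "nat \<Rightarrow> (real \<Rightarrow> real) \<Rightarrow> (nat \<Rightarrow> real) \<Rightarrow> real" where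
  "tally n \<phi> v = (\<Sum>j\<in>{1..n}. \<phi> (v j))"

lemma tally_fun_upd:
  "i \<in> {1..n} \<Longrightarrow> tally n \<phi> (w(i := a)) = \<phi> a + (\<Sum>j\<in>{1..n} - {i}. \<phi> (w j))"
  unfolding tally_def by (simp add: sum.remove)

lemma tally_permute: "\<pi> permutes {1..n} \<Longrightarrow> tally n \<phi> (v \<circ> \<pi>) = tally n \<phi> v"
  unfolding tally_def using sum.permute[of \<pi> "{1..n}" "\<lambda>j. \<phi> (v j)"] by (simp add: comp_def)

lemma tally_bounds:
  assumes "\<And>y. 0 \<le> \<phi> y" "\<And>y. \<phi> y \<le> 1"
  shows "0 \<le> tally n \<phi> v" "tally n \<phi> v \<le> real n"
proof -
  show "0 \<le> tally n \<phi> v"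
    unfolding tally_def by (rule sum_nonneg) (use assms in auto)
  have "tally n \<phi> v \<le> of_nat (card {1..n}) * 1"
    unfolding tally_def by (rule sum_bounded_above) (use assms in auto)
  then show "tally n \<phi> v \<le> real n" by simp
qed

lemma tally_indicator_bounds: "0 \<le> tally n (indicator A) v" "tally n (indicator A) v \<le> real n"
  by (rule tally_bounds; simp add: indicator_def)+

lemma interim_gap_tally:
  fixes M :: real
  assumes "0 < M" "M \<noteq> 1" "i \<in> {1..n}"
  shows "interim_gap n M e (tally n \<phi>) i a b = \<phi> a - \<phi> b"
  by (rule interim_gap_const[OF assms(1,2)]) (simp add: tally_fun_upd[OF assms(3)])

lemma interim_gap_tally_mult_const:
  fixes M :: real
  assumes "0 < M" "M \<noteq> 1" "i \<in> {1..n}" "\<phi> a = \<phi> b" "\<psi> a = \<psi> b"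
  shows "interim_gap n M e (\<lambda>v. tally n \<phi> v * tally n \<psi> v) i a b = 0"
  by (rule interim_gap_const[OF assms(1,2)]) (simp add: tally_fun_upd[OF assms(3)] assms(4,5))

lemma interim_gap_tally_mult_swap:
  fixes M :: real
  assumes "0 < M" "M \<noteq> 1" "i \<in> {1..n}" "\<phi> a = 1" "\<phi> b = 0" "\<psi> a = 0" "\<psi> b = 1"
  shows "interim_gap n M e (\<lambda>v. tally n \<phi> v * tally n \<psi> v) i a b
       = (\<Sum>j\<in>{1..n} - {i}. \<Sum>x\<in>Vals M. pr M e j x * (\<psi> x - \<phi> x))"
proof -
  have "interim_gap n M e (\<lambda>v. tally n \<phi> v * tally n \<psi> v) i a b
     = (\<Sum>w\<in>PiE ({1..n} - {i}) (\<lambda>_. Vals M). (\<Prod>k\<in>{1..n} - {i}. pr M e k (w k))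
          * (\<Sum>j\<in>{1..n} - {i}. \<psi> (w j) - \<phi> (w j)))"
    unfolding interim_gap_eq_sum
    by (intro sum.cong refl)
      (simp add: tally_fun_upd[OF assms(3)] assms(4-7) sum_subtractf algebra_simps)
  also have "\<dots> = (\<Sum>j\<in>{1..n} - {i}. \<Sum>x\<in>Vals M. pr M e j x * (\<psi> x - \<phi> x))"
    by (rule sum_PiE_prod_mult_sum) (simp_all add: sum_pr_Vals[OF assms(1,2)])
  finally show ?thesis .
qed

definition positive_share :: "nat \<Rightarrow> (nat \<Rightarrow> real) \<Rightarrow> real" where
  "positive_share n v = (1 + tally n (indicator {0<..}) v) / (real n + 2)"

lemma positive_share_bounds:
  "1 / (real n + 2) \<le> positive_share n v" "positive_share n v \<le> 1 - 1 / (real n + 2)"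
  using tally_indicator_bounds[of n "{0<..}" v]
  by (simp_all add: positive_share_def divide_simps)

lemma interim_gap_positive_share:
  fixes M :: real
  assumes "0 < M" "M \<noteq> 1" "i \<in> {1..n}"
  shows "interim_gap n M e (positive_share n) i a b
       = (indicator {0<..} a - indicator {0<..} b) / (real n + 2)"
  by (rule interim_gap_const[OF assms(1,2)])
    (simp add: positive_share_def tally_fun_upd[OF assms(3)] diff_divide_distrib[symmetric])

lemma fun_upd_in_profiles:
  assumes "w \<in> PiE ({1..n} - {i}) (\<lambda>_. Vals M)" "i \<in> {1..n}" "a \<in> Vals M"
  shows "w(i := a) \<in> profiles n M"
proof -
  have "w(i := a) \<in> PiE (insert i ({1..n} - {i})) (\<lambda>_. Vals M)"
    using assms by (intro PiE_fun_upd)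
  then show ?thesis
    using assms(2) by (simp add: profiles_def insert_absorb)
qed

lemma comp_bij_in_PiE:
  assumes "w \<in> PiE A (\<lambda>_. V)" "bij \<pi>" "\<pi> ` B = A"
  shows "w \<circ> \<pi> \<in> PiE B (\<lambda>_. V)"
proof -
  have "\<pi> k \<in> A \<longleftrightarrow> k \<in> B" for k
    using assms(3) inj_image_mem_iff[OF bij_is_inj[OF assms(2)]] by blast
  then show ?thesis
    using assms(1) by (auto simp: PiE_iff extensional_def)
qed

lemma transpose_image_remove:
  "i \<in> A \<Longrightarrow> j \<in> A \<Longrightarrow> Transposition.transpose i j ` (A - {i}) = A - {j}"
  by (auto simp: in_transpose_image_iff Transposition.transpose_def)

lemma interim_transpose:
  assumes anon: "anonymous n M f" and i: "i \<in> {1..n}" and j: "j \<in> {1..n}"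
    and same_class: "i \<in> {1,2} \<longleftrightarrow> j \<in> {1,2}" and a: "a \<in> Vals M"
  shows "interim n M e f i a = interim n M e f j a"
proof -
  define \<pi> where "\<pi> = Transposition.transpose i j"
  have perm: "\<pi> permutes {1..n}"
    unfolding \<pi>_def using i j by (rule permutes_swap_id)
  have image_i: "\<pi> ` ({1..n} - {i}) = {1..n} - {j}"
    unfolding \<pi>_def using i j by (rule transpose_image_remove)
  have image_j: "\<pi> ` ({1..n} - {j}) = {1..n} - {i}"
    unfolding \<pi>_def using j i by (subst transpose_commute) (rule transpose_image_remove)
  have "\<pi> k \<in> {1,2} \<longleftrightarrow> k \<in> {1,2}" for k
    using same_class by (auto simp: \<pi>_def Transposition.transpose_def)
  then have pr_\<pi>: "pr M e (\<pi> k) x = pr M e k x" for k x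
    unfolding pr_def by presburger
  show ?thesis
    unfolding interim_def
  proof (rule sum.reindex_bij_witness[where i="\<lambda>w. w \<circ> \<pi>" and j="\<lambda>w. w \<circ> \<pi>"])
    fix w assume w: "w \<in> PiE ({1..n} - {i}) (\<lambda>_. Vals M)"
    show "w \<circ> \<pi> \<circ> \<pi> = w"
      by (simp add: \<pi>_def fun_eq_iff)
    show "w \<circ> \<pi> \<in> PiE ({1..n} - {j}) (\<lambda>_. Vals M)"
      using w image_j by (simp add: comp_bij_in_PiE \<pi>_def)
    have "(\<Prod>k\<in>{1..n} - {j}. pr M e k ((w \<circ> \<pi>) k))
        = (\<Prod>k\<in>{1..n} - {j}. pr M e (\<pi> k) (w (\<pi> k)))"
      by (simp add: pr_\<pi>)
    also have "\<dots> = (\<Prod>k\<in>{1..n} - {i}. pr M e k (w k))"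
      using prod.reindex[of \<pi> "{1..n} - {j}" "\<lambda>k. pr M e k (w k)"] image_j
      by (simp add: \<pi>_def)
    finally have weights: "(\<Prod>k\<in>{1..n} - {j}. pr M e k ((w \<circ> \<pi>) k))
        = (\<Prod>k\<in>{1..n} - {i}. pr M e k (w k))" .
    have "(w \<circ> \<pi>)(j := a) = w(i := a) \<circ> \<pi>"
      by (auto simp: fun_eq_iff \<pi>_def Transposition.transpose_def)
    moreover have "f (w(i := a) \<circ> \<pi>) = f (w(i := a))"
      using anon fun_upd_in_profiles[OF w i a] perm unfolding anonymous_def by blast
    ultimately show "(\<Prod>k\<in>{1..n} - {j}. pr M e k ((w \<circ> \<pi>) k)) * f ((w \<circ> \<pi>)(j := a))
        = (\<Prod>k\<in>{1..n} - {i}. pr M e k (w k)) * f (w(i := a))"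
      using weights by simp
  next
    fix w assume "w \<in> PiE ({1..n} - {j}) (\<lambda>_. Vals M)"
    then show "w \<circ> \<pi> \<circ> \<pi> = w" "w \<circ> \<pi> \<in> PiE ({1..n} - {i}) (\<lambda>_. Vals M)"
      using image_i by (simp_all add: comp_bij_in_PiE \<pi>_def fun_eq_iff)
  qed
qed

definition agent_IC :: "nat \<Rightarrow> real \<Rightarrow> real \<Rightarrow> ((nat \<Rightarrow> real) \<Rightarrow> real) \<Rightarrow> nat \<Rightarrow> bool" where
  "agent_IC n M e f i \<longleftrightarrow>
     (\<forall>a\<in>Vals M. \<forall>b\<in>Vals M. a * interim n M e f i a \<ge> a * interim n M e f i b)"

lemma BIC_iff_agent_IC: "BIC n M e f \<longleftrightarrow> (\<forall>i\<in>{1..n}. agent_IC n M e f i)"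
  by (simp add: BIC_def agent_IC_def)

lemma agent_IC_iff:
  fixes M :: real
  assumes "0 < M"
  shows "agent_IC n M e f i \<longleftrightarrow>
    interim_gap n M e f i M 1 = 0 \<and> interim_gap n M e f i (-1) (-(M^2)) = 0 \<and>
    0 \<le> interim_gap n M e f i 1 (-1)"
proof -
  define Q where "Q = interim n M e f i"
  have "0 < M^2" using assms by simp
  have "agent_IC n M e f i \<longleftrightarrow>
      (\<forall>a\<in>Vals M. \<forall>b\<in>Vals M. (0 < a \<longrightarrow> Q b \<le> Q a) \<and> (a < 0 \<longrightarrow> Q a \<le> Q b))"
    using assms \<open>0 < M^2\<close> by (auto simp: agent_IC_def Q_def Vals_def mult_le_cancel_left)
  also have "\<dots> \<longleftrightarrow> Q M = Q 1 \<and> Q (-1) = Q (-(M^2)) \<and> Q (-1) \<le> Q 1"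
    using assms \<open>0 < M^2\<close> by (auto simp: Vals_def)
  finally show ?thesis
    by (auto simp: interim_gap_def Q_def)
qed

lemma agent_IC_transpose:
  assumes "anonymous n M f" "i \<in> {1..n}" "j \<in> {1..n}" "i \<in> {1,2} \<longleftrightarrow> j \<in> {1,2}"
  shows "agent_IC n M e f i \<longleftrightarrow> agent_IC n M e f j"
  using interim_transpose[OF assms] by (simp add: agent_IC_def)

lemma BIC_if_agent_IC_1_3:
  assumes anon: "anonymous n M f" and "3 \<le> n"
    and IC: "agent_IC n M e f 1" "agent_IC n M e f 3"
  shows "BIC n M e f"
  unfolding BIC_iff_agent_IC
proof
  fix i assume i: "i \<in> {1..n}"
  have one: "1 \<in> {1..n}" and three: "3 \<in> {1..n}" using \<open>3 \<le> n\<close> by auto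
  show "agent_IC n M e f i"
  proof (cases "i \<in> {1,2}")
    case True
    then show ?thesis using agent_IC_transpose[OF anon i one] IC(1) by simp
  next
    case False
    then show ?thesis using agent_IC_transpose[OF anon i three] IC(2) by simp
  qed
qed

lemma convex_mix_in_unit_interval:
  fixes t g h c D :: real
  assumes "0 \<le> t" "t \<le> 1" "0 \<le> c" "0 \<le> D" "-D \<le> g" "g \<le> 1 + D" "c \<le> h" "h \<le> 1 - c"
    and "t = 1 \<or> D \<le> t * c"
  shows "0 \<le> (1 - t) * g + t * h \<and> (1 - t) * g + t * h \<le> 1"
  using assms(9)
proof
  assume "D \<le> t * c"
  have "(1 - t) * (-D) \<le> (1 - t) * g" "(1 - t) * g \<le> (1 - t) * (1 + D)"
    by (rule mult_left_mono; use assms in simp)+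
  moreover have "t * c \<le> t * h" "t * h \<le> t * (1 - c)"
    by (rule mult_left_mono; use assms in simp)+
  moreover have "0 \<le> t * D" using assms by simp
  ultimately show ?thesis
    using \<open>D \<le> t * c\<close> by (simp add: algebra_simps)
qed (use assms in auto)

lemma convex_mix_nonneg:
  fixes t g c N :: real
  assumes "0 \<le> t" "t \<le> 1" "0 \<le> c" "-N \<le> g" "t = 1 \<or> N \<le> t * c"
  shows "0 \<le> (1 - t) * g + t * c"
proof (cases "0 \<le> g")
  case True
  then show ?thesis using assms by simp
next
  case False
  then have "g \<le> (1 - t) * g" using assms by (simp add: mult_le_cancel_right2)
  then show ?thesis using assms by auto
qed

locale BIC_perturbation =
  fixes n :: nat and M :: real and f :: "(nat \<Rightarrow> real) \<Rightarrow> real"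
  assumes three_le_n: "3 \<le> n" and M_pos: "0 < M" and M_ne_1: "M \<noteq> 1"
    and f_SCF: "is_SCF n M f" and f_anonymous: "anonymous n M f" and f_BIC: "BIC n M 0 f"
begin

definition pooled :: "real \<Rightarrow> real \<Rightarrow> bool" where
  "pooled a b \<longleftrightarrow> (a = M \<and> b = 1) \<or> (a = -1 \<and> b = -(M^2))"

definition pair_gap :: "real \<Rightarrow> real \<Rightarrow> nat \<Rightarrow> real \<Rightarrow> real" where
  "pair_gap a b k e =
     interim_gap n M e (\<lambda>v. tally n (indicator {a}) v * tally n (indicator {b}) v) k a b"

text \<open>\<open>(coeff_x a b e, coeff_y a b e)\<close> solves the linear system
  \<open>interim_gap n M e f k a b + x + y * pair_gap a b k e = 0\<close> for \<open>k = 1, 3\<close>.\<close>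

definition coeff_y :: "real \<Rightarrow> real \<Rightarrow> real \<Rightarrow> real" where
  "coeff_y a b e = (interim_gap n M e f 3 a b - interim_gap n M e f 1 a b)
                   / (pair_gap a b 1 e - pair_gap a b 3 e)"

definition coeff_x :: "real \<Rightarrow> real \<Rightarrow> real \<Rightarrow> real" where
  "coeff_x a b e = - interim_gap n M e f 1 a b - coeff_y a b e * pair_gap a b 1 e"

definition correction :: "real \<Rightarrow> real \<Rightarrow> real \<Rightarrow> (nat \<Rightarrow> real) \<Rightarrow> real" where
  "correction a b e = (\<lambda>v. coeff_x a b e * tally n (indicator {a}) v
     + coeff_y a b e * (tally n (indicator {a}) v * tally n (indicator {b}) v))"

definition corrected :: "real \<Rightarrow> (nat \<Rightarrow> real) \<Rightarrow> real" where
  "corrected e = (\<lambda>v. f v + correction M 1 e v + correction (-1) (-(M^2)) e v)"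

definition correction_bound :: "real \<Rightarrow> real" where
  "correction_bound e = real n ^ 2 * (\<bar>coeff_x M 1 e\<bar> + \<bar>coeff_y M 1 e\<bar>
     + \<bar>coeff_x (-1) (-(M^2)) e\<bar> + \<bar>coeff_y (-1) (-(M^2)) e\<bar>)"

definition separation_deficit :: "real \<Rightarrow> real" where
  "separation_deficit e = max 0 (- interim_gap n M e (corrected e) 1 1 (-1))
     + max 0 (- interim_gap n M e (corrected e) 3 1 (-1))"

definition mix_weight :: "real \<Rightarrow> real" where
  "mix_weight e = min 1 ((real n + 2) * (correction_bound e + separation_deficit e))"

definition perturbed :: "real \<Rightarrow> (nat \<Rightarrow> real) \<Rightarrow> real" where
  "perturbed e = (\<lambda>v. (1 - mix_weight e) * corrected e v + mix_weight e * positive_share n v)"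

lemma one_three_agents: "1 \<in> {1..n}" "3 \<in> {1..n}"
  using three_le_n by auto

lemma f_gap_at_0:
  assumes "k \<in> {1..n}"
  shows "pooled a b \<Longrightarrow> interim_gap n M 0 f k a b = 0"
    and "0 \<le> interim_gap n M 0 f k 1 (-1)"
  using f_BIC assms by (auto simp: pooled_def BIC_iff_agent_IC agent_IC_iff[OF M_pos])

lemma pair_gap_1_minus_3:
  assumes "pooled a b"
  shows "\<bar>pair_gap a b 1 e - pair_gap a b 3 e\<bar> = \<bar>1 - 4 * e\<bar>"
proof -
  define h where "h j = (\<Sum>x\<in>Vals M. pr M e j x * (indicator {b} x - indicator {a} x))" for j
  have "a \<noteq> b" "a \<in> Vals M" "b \<in> Vals M"
    using assms Vals_distinct[OF M_pos M_ne_1] by (auto simp: pooled_def Vals_def)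
  then have "pair_gap a b k e = (\<Sum>j\<in>{1..n} - {k}. h j)" if "k \<in> {1..n}" for k
    unfolding pair_gap_def h_def
    by (intro interim_gap_tally_mult_swap[OF M_pos M_ne_1 that]) simp_all
  then have "pair_gap a b 1 e - pair_gap a b 3 e = h 3 - h 1"
    using one_three_agents by (simp add: sum_diff1)
  moreover have "\<bar>h 3 - h 1\<bar> = \<bar>1 - 4 * e\<bar>"
    using assms Vals_distinct[OF M_pos M_ne_1]
    by (auto simp: pooled_def h_def Vals_def pr_def abs_minus_commute)
  ultimately show ?thesis by simp
qed

lemma interim_gap_correction_own:
  "k \<in> {1..n} \<Longrightarrow> a \<noteq> b \<Longrightarrow>
    interim_gap n M e (correction a b e) k a b = coeff_x a b e + coeff_y a b e * pair_gap a b k e"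
  by (simp add: correction_def pair_gap_def interim_gap_add interim_gap_cmult
      interim_gap_tally[OF M_pos M_ne_1])

lemma interim_gap_correction_other:
  "k \<in> {1..n} \<Longrightarrow> a \<notin> {c, d} \<Longrightarrow> b \<notin> {c, d} \<Longrightarrow>
    interim_gap n M e (correction c d e) k a b = 0"
  by (simp add: correction_def interim_gap_add interim_gap_cmult
      interim_gap_tally[OF M_pos M_ne_1] interim_gap_tally_mult_const[OF M_pos M_ne_1])

lemma interim_gap_corrected_pooled:
  assumes "pooled a b" "k \<in> {1..n}"
  shows "interim_gap n M e (corrected e) k a b
       = interim_gap n M e f k a b + coeff_x a b e + coeff_y a b e * pair_gap a b k e"
  using assms Vals_distinct[OF M_pos M_ne_1]
  by (auto simp: pooled_def corrected_def interim_gap_add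
      interim_gap_correction_own interim_gap_correction_other)

lemma interim_gap_corrected_pooled_eq_0:
  assumes "pooled a b" "k \<in> {1, 3}" "e \<noteq> 1/4"
  shows "interim_gap n M e (corrected e) k a b = 0"
proof -
  have "pair_gap a b 1 e \<noteq> pair_gap a b 3 e"
    using pair_gap_1_minus_3[OF assms(1), of e] assms(3) by auto
  then show ?thesis
    using assms one_three_agents
    by (auto simp: interim_gap_corrected_pooled coeff_x_def coeff_y_def field_simps)
qed

lemma coeff_tendsto_0:
  assumes "pooled a b"
  shows "(coeff_y a b \<longlongrightarrow> 0) (at_right 0)" "(coeff_x a b \<longlongrightarrow> 0) (at_right 0)"
proof -
  have "((\<lambda>e. interim_gap n M e f k a b) \<longlongrightarrow> 0) (at_right 0)" if "k \<in> {1..n}" for k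
    using interim_gap_tendsto[of n M f k a b 0] f_gap_at_0(1)[OF that assms] by simp
  then have f_gaps: "((\<lambda>e. interim_gap n M e f 1 a b) \<longlongrightarrow> 0) (at_right 0)"
      "((\<lambda>e. interim_gap n M e f 3 a b) \<longlongrightarrow> 0) (at_right 0)"
    using one_three_agents by auto
  have pair_gaps: "((\<lambda>e. pair_gap a b k e) \<longlongrightarrow> pair_gap a b k 0) (at_right 0)" for k
    unfolding pair_gap_def by (rule interim_gap_tendsto)
  have "pair_gap a b 1 0 - pair_gap a b 3 0 \<noteq> 0"
    using pair_gap_1_minus_3[OF assms, of 0] by auto
  then have "(coeff_y a b \<longlongrightarrow> (0 - 0) / (pair_gap a b 1 0 - pair_gap a b 3 0)) (at_right 0)"
    unfolding coeff_y_def by (intro tendsto_intros f_gaps pair_gaps)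
  then show y: "(coeff_y a b \<longlongrightarrow> 0) (at_right 0)" by simp
  have "(coeff_x a b \<longlongrightarrow> - 0 - 0 * pair_gap a b 1 0) (at_right 0)"
    unfolding coeff_x_def by (intro tendsto_intros f_gaps y pair_gaps)
  then show "(coeff_x a b \<longlongrightarrow> 0) (at_right 0)" by simp
qed

lemma abs_correction_le:
  "\<bar>correction a b e v\<bar> \<le> real n ^ 2 * (\<bar>coeff_x a b e\<bar> + \<bar>coeff_y a b e\<bar>)"
proof -
  define A where "A = tally n (indicator {a}) v"
  define B where "B = tally n (indicator {b}) v"
  have A: "0 \<le> A" "A \<le> real n" and B: "0 \<le> B" "B \<le> real n"
    unfolding A_def B_def by (rule tally_indicator_bounds)+
  have "real n * 1 \<le> real n * real n"
    by (rule mult_left_mono) (use three_le_n in auto)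
  then have A_le: "A \<le> real n ^ 2"
    using A by (simp add: power2_eq_square)
  have AB_le: "A * B \<le> real n ^ 2"
    using A B by (simp add: power2_eq_square mult_mono)
  have "\<bar>correction a b e v\<bar> \<le> \<bar>coeff_x a b e\<bar> * A + \<bar>coeff_y a b e\<bar> * (A * B)"
    using abs_triangle_ineq[of "coeff_x a b e * A" "coeff_y a b e * (A * B)"] A B
    by (simp add: correction_def A_def[symmetric] B_def[symmetric] abs_mult)
  also have "\<dots> \<le> \<bar>coeff_x a b e\<bar> * real n ^ 2 + \<bar>coeff_y a b e\<bar> * real n ^ 2"
    using A_le AB_le by (intro add_mono mult_left_mono) simp_all
  finally show ?thesis
    by (simp add: algebra_simps)
qed

lemma abs_corrected_minus_le: "\<bar>corrected e v - f v\<bar> \<le> correction_bound e"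
proof -
  have "\<bar>corrected e v - f v\<bar> = \<bar>correction M 1 e v + correction (-1) (-(M^2)) e v\<bar>"
    by (simp add: corrected_def)
  also have "\<dots> \<le> \<bar>correction M 1 e v\<bar> + \<bar>correction (-1) (-(M^2)) e v\<bar>"
    by (rule abs_triangle_ineq)
  also have "\<dots> \<le> correction_bound e"
    using abs_correction_le[of M 1 e v] abs_correction_le[of "-1" "-(M^2)" e v]
    by (simp add: correction_bound_def algebra_simps)
  finally show ?thesis .
qed

lemma correction_tendsto_0:
  assumes "pooled a b"
  shows "((\<lambda>e. correction a b e v) \<longlongrightarrow> 0) (at_right 0)"
  unfolding correction_def
  by (intro tendsto_add_zero tendsto_mult_left_zero coeff_tendsto_0[OF assms])

lemma interim_gap_correction_tendsto_0:
  assumes "pooled a b"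
  shows "((\<lambda>e. interim_gap n M e (correction a b e) k c d) \<longlongrightarrow> 0) (at_right 0)"
proof -
  let ?A = "tally n (indicator {a})"
  let ?AB = "\<lambda>v. tally n (indicator {a}) v * tally n (indicator {b}) v"
  have "((\<lambda>e. coeff_x a b e * interim_gap n M e ?A k c d + coeff_y a b e * interim_gap n M e ?AB k c d)
      \<longlongrightarrow> 0 * interim_gap n M 0 ?A k c d + 0 * interim_gap n M 0 ?AB k c d) (at_right 0)"
    by (intro tendsto_intros coeff_tendsto_0[OF assms] interim_gap_tendsto)
  then show ?thesis
    by (simp add: correction_def interim_gap_add interim_gap_cmult)
qed

lemma corrected_tendsto: "((\<lambda>e. corrected e v) \<longlongrightarrow> f v) (at_right 0)"
proof -
  have "((\<lambda>e. f v + correction M 1 e v + correction (-1) (-(M^2)) e v) \<longlongrightarrow> f v + 0 + 0)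
      (at_right 0)"
    by (intro tendsto_add tendsto_const correction_tendsto_0) (simp_all add: pooled_def)
  then show ?thesis by (simp add: corrected_def)
qed

lemma correction_bound_tendsto_0: "(correction_bound \<longlongrightarrow> 0) (at_right 0)"
proof -
  have "pooled M 1" "pooled (-1) (-(M^2))" by (simp_all add: pooled_def)
  then have "(correction_bound \<longlongrightarrow> real n ^ 2 * (\<bar>0\<bar> + \<bar>0\<bar> + \<bar>0\<bar> + \<bar>0\<bar>)) (at_right 0)"
    unfolding correction_bound_def by (intro tendsto_intros coeff_tendsto_0)
  then show ?thesis by simp
qed

lemma interim_gap_corrected_tendsto:
  "((\<lambda>e. interim_gap n M e (corrected e) k 1 (-1)) \<longlongrightarrow> interim_gap n M 0 f k 1 (-1)) (at_right 0)"
proof -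
  have "((\<lambda>e. interim_gap n M e f k 1 (-1) + interim_gap n M e (correction M 1 e) k 1 (-1)
      + interim_gap n M e (correction (-1) (-(M^2)) e) k 1 (-1))
      \<longlongrightarrow> interim_gap n M 0 f k 1 (-1) + 0 + 0) (at_right 0)"
    by (intro tendsto_add interim_gap_tendsto interim_gap_correction_tendsto_0)
      (simp_all add: pooled_def)
  then show ?thesis
    by (simp add: corrected_def interim_gap_add)
qed

lemma separation_deficit_tendsto_0: "(separation_deficit \<longlongrightarrow> 0) (at_right 0)"
proof -
  have "(separation_deficit \<longlongrightarrow> max 0 (- interim_gap n M 0 f 1 1 (-1)) + max 0 (- interim_gap n M 0 f 3 1 (-1)))
      (at_right 0)"
    unfolding separation_deficit_def by (intro tendsto_intros interim_gap_corrected_tendsto)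
  then show ?thesis
    using f_gap_at_0(2)[OF one_three_agents(1)] f_gap_at_0(2)[OF one_three_agents(2)] by simp
qed

lemma mix_weight_tendsto_0: "(mix_weight \<longlongrightarrow> 0) (at_right 0)"
proof -
  have "(mix_weight \<longlongrightarrow> min 1 ((real n + 2) * (0 + 0))) (at_right 0)"
    unfolding mix_weight_def
    by (intro tendsto_intros correction_bound_tendsto_0 separation_deficit_tendsto_0)
  then show ?thesis by simp
qed

lemma correction_bound_nonneg: "0 \<le> correction_bound e"
  by (simp add: correction_bound_def)

lemma separation_deficit_nonneg: "0 \<le> separation_deficit e"
  by (simp add: separation_deficit_def)

lemma mix_weight_bounds: "0 \<le> mix_weight e" "mix_weight e \<le> 1"
  using correction_bound_nonneg[of e] separation_deficit_nonneg[of e] by (simp_all add: mix_weight_def)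

lemma mix_weight_cases:
  "mix_weight e = 1 \<or> correction_bound e + separation_deficit e \<le> mix_weight e * (1 / (real n + 2))"
proof (cases "(real n + 2) * (correction_bound e + separation_deficit e) \<le> 1")
  case True
  then have "mix_weight e = (real n + 2) * (correction_bound e + separation_deficit e)"
    by (simp add: mix_weight_def)
  then show ?thesis by simp
next
  case False
  then show ?thesis by (simp add: mix_weight_def)
qed

lemma perturbed_SCF: "is_SCF n M (perturbed e)"
  unfolding is_SCF_def
proof
  fix v assume "v \<in> profiles n M"
  then have "0 \<le> f v" "f v \<le> 1"
    using f_SCF by (auto simp: is_SCF_def)
  moreover have "\<bar>corrected e v - f v\<bar> \<le> correction_bound e"
    by (rule abs_corrected_minus_le)
  moreover note correction_bound_nonneg[of e]
  ultimately show "0 \<le> perturbed e v \<and> perturbed e v \<le> 1"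
    unfolding perturbed_def
    using mix_weight_bounds mix_weight_cases[of e] separation_deficit_nonneg[of e]
      positive_share_bounds[of n v]
    by (intro convex_mix_in_unit_interval[where D = "correction_bound e"]) auto
qed

lemma perturbed_anonymous: "anonymous n M (perturbed e)"
  unfolding anonymous_def
proof (intro ballI allI impI)
  fix v \<pi> assume "v \<in> profiles n M" "\<pi> permutes {1..n}"
  then show "perturbed e (v \<circ> \<pi>) = perturbed e v"
    using f_anonymous
    by (simp add: anonymous_def perturbed_def corrected_def correction_def positive_share_def
        tally_permute)
qed

lemma interim_gap_perturbed:
  "interim_gap n M e (perturbed e) k a b
   = (1 - mix_weight e) * interim_gap n M e (corrected e) k a b
     + mix_weight e * interim_gap n M e (positive_share n) k a b"
  by (simp add: perturbed_def interim_gap_add interim_gap_cmult)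

lemma perturbed_agent_IC:
  assumes "k \<in> {1, 3}" "e \<noteq> 1/4"
  shows "agent_IC n M e (perturbed e) k"
proof -
  have k: "k \<in> {1..n}" using assms(1) one_three_agents by auto
  have "pooled M 1" "pooled (-1) (-(M^2))" by (simp_all add: pooled_def)
  then have pooled_gaps: "interim_gap n M e (corrected e) k M 1 = 0"
      "interim_gap n M e (corrected e) k (-1) (-(M^2)) = 0"
    using interim_gap_corrected_pooled_eq_0 assms by blast+
  have share_gaps: "interim_gap n M e (positive_share n) k M 1 = 0"
      "interim_gap n M e (positive_share n) k (-1) (-(M^2)) = 0"
      "interim_gap n M e (positive_share n) k 1 (-1) = 1 / (real n + 2)"
    using M_pos by (simp_all add: interim_gap_positive_share[OF M_pos M_ne_1 k])
  have "- separation_deficit e \<le> interim_gap n M e (corrected e) k 1 (-1)"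
    using assms(1) by (auto simp: separation_deficit_def)
  moreover have "mix_weight e = 1 \<or> separation_deficit e \<le> mix_weight e * (1 / (real n + 2))"
    using mix_weight_cases[of e] correction_bound_nonneg[of e] by auto
  ultimately have "0 \<le> (1 - mix_weight e) * interim_gap n M e (corrected e) k 1 (-1)
      + mix_weight e * (1 / (real n + 2))"
    using mix_weight_bounds by (intro convex_mix_nonneg) auto
  then show ?thesis
    by (simp add: agent_IC_iff[OF M_pos] interim_gap_perturbed pooled_gaps share_gaps)
qed

lemma perturbed_BIC: "e \<noteq> 1/4 \<Longrightarrow> BIC n M e (perturbed e)"
  using BIC_if_agent_IC_1_3[OF perturbed_anonymous three_le_n] perturbed_agent_IC by simp

lemma perturbed_tendsto: "((\<lambda>e. perturbed e v) \<longlongrightarrow> f v) (at_right 0)"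
proof -
  have "((\<lambda>e. perturbed e v) \<longlongrightarrow> (1 - 0) * f v + 0 * positive_share n v) (at_right 0)"
    unfolding perturbed_def by (intro tendsto_intros mix_weight_tendsto_0 corrected_tendsto)
  then show ?thesis by simp
qed

end

theorem lemma6:
  fixes n :: nat and M :: real
  assumes "n \<ge> 3" and "M > 0"
    and A: "2 / real n * (-(M^2) + M + real n - 2) + (real n - 2) / real n * (2*M + real n - 4) < 0"
    and B: "2*M - (real n - 2) > 0"
  shows "\<exists>eb::real. 0 < eb \<and> eb \<le> 1/4 \<and>
    (\<forall>f. is_SCF n M f \<and> anonymous n M f \<and> BIC n M 0 f \<longrightarrow>
      (\<exists>F :: real \<Rightarrow> (nat \<Rightarrow> real) \<Rightarrow> real.
        (\<forall>eps\<in>{0<..eb}. is_SCF n M (F eps) \<and> anonymous n M (F eps) \<and> BIC n M eps (F eps)) \<and>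
        (\<forall>v\<in>profiles n M. ((\<lambda>eps. F eps v) \<longlongrightarrow> f v) (at_right 0))))"
proof -
  have "M \<noteq> 1"
  proof
    assume "M = 1"
    then have "2 / real n * (-(M^2) + M + real n - 2) + (real n - 2) / real n * (2*M + real n - 4)
        = 2 / real n * (real n - 2) + (real n - 2) / real n * (real n - 2)"
      by simp
    moreover have "0 \<le> 2 / real n * (real n - 2) + (real n - 2) / real n * (real n - 2)"
      using \<open>n \<ge> 3\<close> by (intro add_nonneg_nonneg mult_nonneg_nonneg divide_nonneg_nonneg) auto
    ultimately show False using A by linarith
  qed
  show ?thesis
  proof (intro exI[of _ "1/8"] conjI allI impI)
    fix f assume "is_SCF n M f \<and> anonymous n M f \<and> BIC n M 0 f"
    then interpret BIC_perturbation n M f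
      using assms \<open>M \<noteq> 1\<close> by unfold_locales auto
    show "\<exists>F. (\<forall>eps\<in>{0<..1/8}. is_SCF n M (F eps) \<and> anonymous n M (F eps) \<and> BIC n M eps (F eps))
        \<and> (\<forall>v\<in>profiles n M. ((\<lambda>eps. F eps v) \<longlongrightarrow> f v) (at_right 0))"
      by (intro exI[of _ perturbed] conjI ballI)
        (auto simp: perturbed_SCF perturbed_anonymous perturbed_BIC perturbed_tendsto)
  qed simp_all
qed

end
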